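(* Let $A$ be a finite-dimensional unital algebra over a field of characteristic $0$, let $a\in\mathrm{LN_{alt}}(A)$, and let $L_a=(L_a)_s+(L_a)_n$ be the Jordan–Chevalley decomposition of $L_a$ in $\mathrm{End}(A)$ (semisimple plus nilpotent, commuting). Then there exist $a_s,a_n\in\mathrm{LN_{alt}}(A)$ such that $(L_a)_s=L_{a_s}$ and $(L_a)_n=L_{a_n}$.
   Context: Algebras are not necessarily associative; $(x,y,z)=(xy)z-x(yz)$ is the associator and $L_x$ is left multiplication by $x$. $\mathrm{LN_{alt}}(A)=\{a\in A:(a,x,y)=-(x,a,y)\ \forall x,y\in A\}$. *)

theory Defs
  imports Main "HOL-Computational_Algebra.Polynomial"
begin

definition associator :: "('v::ab_group_add \<Rightarrow> 'v \<Rightarrow> 'v) \<Rightarrow> 'v \<Rightarrow> 'v \<Rightarrow> 'v \<Rightarrow> 'v" where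
  "associator m x y z = m (m x y) z - m x (m y z)"

definition LN_alt :: "('v::ab_group_add \<Rightarrow> 'v \<Rightarrow> 'v) \<Rightarrow> 'v set" where
  "LN_alt m = {a. \<forall>x y. associator m a x y = - associator m x a y}"

definition Lmul :: "('v \<Rightarrow> 'v \<Rightarrow> 'v) \<Rightarrow> 'v \<Rightarrow> 'v \<Rightarrow> 'v" where
  "Lmul m x = m x"

definition poly_endo :: "('k::field \<Rightarrow> 'v \<Rightarrow> 'v) \<Rightarrow> 'k poly \<Rightarrow> ('v \<Rightarrow> 'v) \<Rightarrow> 'v \<Rightarrow> 'v::ab_group_add" where
  "poly_endo scale p f = (\<lambda>v. \<Sum>i\<le>degree p. scale (coeff p i) ((f ^^ i) v))"

text \<open>Semisimple endomorphism: annihilated by a nonzero separable polynomial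
  (equivalently its minimal polynomial has distinct roots in an algebraic closure).\<close>
definition semisimple_endo :: "('k::field \<Rightarrow> 'v \<Rightarrow> 'v) \<Rightarrow> ('v \<Rightarrow> 'v::ab_group_add) \<Rightarrow> bool" where
  "semisimple_endo scale f \<longleftrightarrow>
     (\<exists>p. p \<noteq> 0 \<and> coprime p (pderiv p) \<and> poly_endo scale p f = (\<lambda>_. 0))"

definition nilpotent_endo :: "('v \<Rightarrow> 'v::zero) \<Rightarrow> bool" where
  "nilpotent_endo f \<longleftrightarrow> (\<exists>k. (f ^^ k) = (\<lambda>_. 0))"

definition fd_unital_algebra ::
  "('k::field \<Rightarrow> 'v \<Rightarrow> 'v) \<Rightarrow> 'v set \<Rightarrow> ('v \<Rightarrow> 'v \<Rightarrow> 'v::ab_group_add) \<Rightarrow> 'v \<Rightarrow> bool" where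
  "fd_unital_algebra scale B m e \<longleftrightarrow>
     finite_dimensional_vector_space scale B \<and>
     (\<forall>x. Vector_Spaces.linear scale scale (m x)) \<and>
     (\<forall>y. Vector_Spaces.linear scale scale (\<lambda>x. m x y)) \<and>
     (\<forall>x. m e x = x \<and> m x e = x)"

end

theory Submission
  imports Defs "HOL-Library.Function_Algebras" "HOL-Algebra.Algebraic_Closure_Type"
begin

text \<open>
  Since \<open>a \<in> LN_alt\<close>, the operator \<open>\<Phi> Z = L\<^sub>a \<circ> Z + Z \<circ> L\<^sub>a\<close> on maps \<open>A \<rightarrow> A\<close>
  sends \<open>L\<^sub>w\<close> to \<open>L\<^bsub>aw + wa\<^esub>\<close>, so it preserves the space of left multiplications.
  Write \<open>\<Phi> = \<Phi>\<^sub>S + \<Phi>\<^sub>N\<close> with \<open>\<Phi>\<^sub>T Z = T \<circ> Z + Z \<circ> T\<close>. Composition with \<open>S\<close> on the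
  left and on the right are commuting operators killed by a separable \<open>p\<close>, so \<open>\<Phi>\<^sub>S\<close> is
  killed by a separable \<open>P\<close> whose roots in an algebraic closure are the sums of two roots
  of \<open>p\<close>; and \<open>\<Phi>\<^sub>N\<close> is nilpotent and commutes with \<open>\<Phi>\<^sub>S\<close>. Hensel lifting in \<open>k[x,y]\<close>
  gives \<open>h\<close> with \<open>h(x + y) \<equiv> x\<close> modulo \<open>(P(x), y\<^sup>K)\<close>, hence \<open>\<Phi>\<^sub>S = h(\<Phi>)\<close> on linear maps
  and \<open>\<Phi>\<^sub>S\<close> preserves left multiplications too: \<open>S L\<^sub>x + L\<^sub>x S = L\<^bsub>M x\<^esub>\<close>.
  Evaluating at the unit gives \<open>S = L\<^bsub>S e\<^esub>\<close> with \<open>S e \<in> LN_alt\<close>, and then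
  \<open>N = L\<^bsub>a - S e\<^esub>\<close>.
\<close>

hide_const (open) Polynomials.degree Polynomials.lead_coeff up_ring.coeff up_ring.monom
  module.smult Coset.order

section \<open>Polynomials in a linear endomorphism\<close>

sublocale vector_space \<subseteq> endo: vector_space_pair scale scale ..

context vector_space
begin

lemma scale_two: "scale 2 v = v + v"
  using scale_left_distrib[of 1 1 v] by (simp only: one_add_one scale_one)

lemma poly_endo_eq_sum_lessThan:
  assumes "degree p < n"
  shows "poly_endo scale p f v = (\<Sum>i<n. scale (coeff p i) ((f ^^ i) v))"
proof -
  have "poly_endo scale p f v = (\<Sum>i<Suc (degree p). scale (coeff p i) ((f ^^ i) v))"
    unfolding poly_endo_def by (simp add: lessThan_Suc_atMost)
  also have "\<dots> = (\<Sum>i<n. scale (coeff p i) ((f ^^ i) v))"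
    by (rule sum.mono_neutral_left) (use assms in \<open>auto simp: coeff_eq_0\<close>)
  finally show ?thesis .
qed

lemma poly_endo_0 [simp]: "poly_endo scale 0 f v = 0"
  by (simp add: poly_endo_def)

lemma poly_endo_const [simp]: "poly_endo scale [:c:] f v = scale c v"
  by (simp add: poly_endo_def)

lemma poly_endo_1 [simp]: "poly_endo scale 1 f v = v"
  using poly_endo_const[of 1] by (simp add: one_pCons)

lemma poly_endo_pCons:
  assumes f: "Vector_Spaces.linear scale scale f"
  shows "poly_endo scale (pCons c p) f v = scale c v + f (poly_endo scale p f v)"
proof -
  define n where "n = Suc (degree p)"
  have "poly_endo scale (pCons c p) f v = (\<Sum>i<Suc n. scale (coeff (pCons c p) i) ((f ^^ i) v))"
    by (rule poly_endo_eq_sum_lessThan) (simp add: n_def degree_pCons_le le_imp_less_Suc)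
  also have "\<dots> = scale c v + (\<Sum>i<n. f (scale (coeff p i) ((f ^^ i) v)))"
    by (subst sum.lessThan_Suc_shift) (simp add: endo.linear_scale[OF f])
  also have "(\<Sum>i<n. f (scale (coeff p i) ((f ^^ i) v))) = f (\<Sum>i<n. scale (coeff p i) ((f ^^ i) v))"
    by (rule endo.linear_sum[OF f, symmetric])
  also have "(\<Sum>i<n. scale (coeff p i) ((f ^^ i) v)) = poly_endo scale p f v"
    by (rule poly_endo_eq_sum_lessThan[symmetric]) (simp add: n_def)
  finally show ?thesis .
qed

lemma poly_endo_add:
  "poly_endo scale (p + q) f v = poly_endo scale p f v + poly_endo scale q f v"
proof -
  define n where "n = Suc (max (degree p) (degree q))"
  have "degree (p + q) < n" "degree p < n" "degree q < n"
    using degree_add_le_max[of p q] by (auto simp: n_def)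
  then show ?thesis
    by (simp add: poly_endo_eq_sum_lessThan scale_left_distrib sum.distrib)
qed

lemma poly_endo_smult: "poly_endo scale (smult c p) f v = scale c (poly_endo scale p f v)"
proof -
  define n where "n = Suc (degree p)"
  have "degree (smult c p) < n" "degree p < n"
    using degree_smult_le[of c p] by (auto simp: n_def)
  then show ?thesis
    by (simp add: poly_endo_eq_sum_lessThan scale_sum_right)
qed

lemma linear_poly_endo:
  assumes f: "Vector_Spaces.linear scale scale f"
  shows "Vector_Spaces.linear scale scale (poly_endo scale p f)"
proof -
  have "poly_endo scale p f (x + y) = poly_endo scale p f x + poly_endo scale p f y" for x y
    by (induction p) (simp_all add: poly_endo_pCons[OF f] endo.linear_add[OF f]
        scale_right_distrib ac_simps)
  moreover have "poly_endo scale p f (scale c x) = scale c (poly_endo scale p f x)" for c x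
    by (induction p) (simp_all add: poly_endo_pCons[OF f] endo.linear_scale[OF f]
        scale_right_distrib mult.commute)
  ultimately show ?thesis
    by (simp add: Vector_Spaces.linear_iff vector_space_axioms)
qed

lemma poly_endo_mult:
  assumes f: "Vector_Spaces.linear scale scale f"
  shows "poly_endo scale (p * q) f v = poly_endo scale p f (poly_endo scale q f v)"
  by (induction p) (simp_all add: poly_endo_add poly_endo_smult poly_endo_pCons[OF f])

lemma poly_endo_X:
  assumes f: "Vector_Spaces.linear scale scale f"
  shows "poly_endo scale [:0, 1:] f v = f v"
  by (simp add: poly_endo_pCons[OF f] endo.linear_0[OF f])

lemma poly_endo_commute:
  assumes f: "Vector_Spaces.linear scale scale f" and g: "Vector_Spaces.linear scale scale g"
    and fg: "\<And>v. g (f v) = f (g v)"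
  shows "g (poly_endo scale p f v) = poly_endo scale p f (g v)"
  by (induction p arbitrary: v)
    (simp_all add: poly_endo_pCons[OF f] endo.linear_0[OF g] endo.linear_add[OF g]
      endo.linear_scale[OF g] fg)

end

lemma (in vector_space_pair) poly_endo_intertwine:
  assumes f: "Vector_Spaces.linear s1 s2 f" and M: "Vector_Spaces.linear s1 s1 M" and \<Phi>: "Vector_Spaces.linear s2 s2 \<Phi>"
    and intertwine: "\<And>x. \<Phi> (f x) = f (M x)"
  shows "poly_endo s2 p \<Phi> (f x) = f (poly_endo s1 p M x)"
  by (induction p arbitrary: x)
    (simp_all add: vs1.poly_endo_pCons[OF M] vs2.poly_endo_pCons[OF \<Phi>] linear_0[OF f]
      linear_add[OF f] linear_scale[OF f] intertwine)

section \<open>Ring homomorphisms and Taylor expansion\<close>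

lemma map_poly_const [simp]: "f 0 = 0 \<Longrightarrow> map_poly f [:c:] = [:f c:]"
  by (simp add: map_poly_pCons)

lemma map_poly_additive:
  assumes "\<And>a b. f (a + b) = f a + f b" and "f 0 = 0"
  shows "map_poly f (p + q) = map_poly f p + map_poly f q"
  by (rule poly_eqI) (simp add: coeff_map_poly assms)

lemma map_poly_multiplicative:
  fixes f :: "'a::comm_ring_1 \<Rightarrow> 'b::comm_ring_1"
  assumes add: "\<And>a b. f (a + b) = f a + f b" and zero: "f 0 = 0"
    and mult: "\<And>a b. f (a * b) = f a * f b"
  shows "map_poly f (p * q) = map_poly f p * map_poly f q"
proof (induction p)
  case (pCons a p)
  have "map_poly f (pCons a p * q) = map_poly f (smult a q + pCons 0 (p * q))"
    by simp
  also have "\<dots> = smult (f a) (map_poly f q) + pCons 0 (map_poly f p * map_poly f q)"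
    by (simp add: map_poly_additive[OF add zero] map_poly_smult zero mult map_poly_pCons pCons.IH)
  also have "\<dots> = map_poly f (pCons a p) * map_poly f q"
    by (simp add: map_poly_pCons zero)
  finally show ?case .
qed simp

lemma poly_map_poly_ring_hom:
  fixes \<Phi> :: "'r::comm_ring_1 \<Rightarrow> 's::comm_ring_1" and \<iota> :: "'a::zero \<Rightarrow> 'r"
  assumes add: "\<And>a b. \<Phi> (a + b) = \<Phi> a + \<Phi> b" and zero: "\<Phi> 0 = 0"
    and mult: "\<And>a b. \<Phi> (a * b) = \<Phi> a * \<Phi> b" and "\<iota> 0 = 0"
  shows "\<Phi> (poly (map_poly \<iota> p) w) = poly (map_poly (\<lambda>c. \<Phi> (\<iota> c)) p) (\<Phi> w)"
  by (induction p) (simp_all add: map_poly_pCons assms)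

lemma dvd_poly_add_diff:
  fixes p :: "'a::comm_ring_1 poly"
  shows "d dvd poly p (a + d) - poly p a"
proof (induction p)
  case (pCons c p)
  then obtain Q where "poly p (a + d) - poly p a = d * Q"
    by (elim dvdE)
  then have "poly (pCons c p) (a + d) - poly (pCons c p) a = d * (poly p a + (a + d) * Q)"
    by (simp add: algebra_simps)
  then show ?case by simp
qed simp

lemma dvd_poly_add_taylor:
  fixes p :: "'a::idom poly"
  shows "d * d dvd poly p (a + d) - poly p a - d * poly (pderiv p) a"
proof (induction p)
  case (pCons c p)
  then obtain Q where "poly p (a + d) - poly p a - d * poly (pderiv p) a = d * d * Q"
    by (elim dvdE)
  then have Q: "poly p (a + d) = poly p a + d * poly (pderiv p) a + d * d * Q"
    by (simp add: algebra_simps)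
  have "poly (pCons c p) (a + d) - poly (pCons c p) a - d * poly (pderiv (pCons c p)) a
      = d * d * (poly (pderiv p) a + (a + d) * Q)"
    by (simp add: pderiv_pCons Q algebra_simps)
  then show ?case by simp
qed simp

lemma dvd_poly_diff: "a - b dvd poly p a - poly p (b :: 'a::comm_ring_1)"
  using dvd_poly_add_diff[of "a - b" p b] by simp

section \<open>Bivariate polynomials and Hensel lifting\<close>

text \<open>Bivariate polynomials are elements of \<open>('a[x])[y]\<close>, encoded as \<open>'a poly poly\<close>.\<close>

definition poly_in_x :: "'a::zero poly \<Rightarrow> 'a poly poly" where
  "poly_in_x p = [:p:]"

definition poly_in_y :: "'a::zero poly \<Rightarrow> 'a poly poly" where
  "poly_in_y p = map_poly (\<lambda>c. [:c:]) p"

definition var_x :: "'a::comm_semiring_1 poly poly" where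
  "var_x = [:[:0, 1:]:]"

definition var_y :: "'a::comm_semiring_1 poly poly" where
  "var_y = [:0, 1:]"

definition poly_subst2 :: "'a::comm_ring_1 poly \<Rightarrow> 'a poly poly \<Rightarrow> 'a poly poly" where
  "poly_subst2 p w = poly (map_poly (\<lambda>c. [:[:c:]:]) p) w"

lemma poly_in_x_add: "poly_in_x (p + q) = poly_in_x p + poly_in_x q"
  and poly_in_x_diff: "poly_in_x (p - q) = poly_in_x p - poly_in_x q"
  and poly_in_x_mult: "poly_in_x (p * q) = poly_in_x p * poly_in_x q"
  and poly_in_x_1: "poly_in_x 1 = 1"
  for p q :: "'a::comm_ring_1 poly"
  by (simp_all add: poly_in_x_def mult.commute)

lemma var_x_poly_in_x: "var_x = poly_in_x [:0, 1:]"
  by (simp add: var_x_def poly_in_x_def)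

lemma poly_subst2_add: "poly_subst2 (p + q) w = poly_subst2 p w + poly_subst2 q w"
  unfolding poly_subst2_def by (subst map_poly_additive) simp_all

lemma poly_subst2_mult: "poly_subst2 (p * q) w = poly_subst2 p w * poly_subst2 q w"
  unfolding poly_subst2_def by (subst map_poly_multiplicative) simp_all

lemma poly_subst2_power: "poly_subst2 (p ^ n) w = poly_subst2 p w ^ n"
  by (induction n) (simp_all add: poly_subst2_mult, simp add: poly_subst2_def flip: one_pCons)

lemma poly_subst2_pcompose:
  "poly_subst2 (pcompose p h) w = poly_subst2 p (poly_subst2 h w)"
proof -
  have "poly_subst2 (poly (map_poly (\<lambda>c. [:c:]) p) h) w
      = poly (map_poly (\<lambda>c. poly_subst2 [:c:] w) p) (poly_subst2 h w)"
    by (rule poly_map_poly_ring_hom) (simp_all add: poly_subst2_add poly_subst2_mult,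
        simp add: poly_subst2_def)
  then show ?thesis
    by (simp add: pcompose_altdef poly_subst2_def map_poly_pCons)
qed

lemma poly_subst2_var_x: "poly_subst2 p var_x = poly_in_x p"
proof -
  have "(\<lambda>q. [:q:]) (poly (map_poly (\<lambda>c. [:c:]) p) [:0, 1:])
      = poly (map_poly (\<lambda>c. [:[:c:]:]) p) [:[:0, 1:]:]"
    by (subst poly_map_poly_ring_hom) simp_all
  moreover have "poly (map_poly (\<lambda>c. [:c:]) p) [:0, 1:] = p"
    using pcompose_idR[of p] by (simp add: pcompose_altdef)
  ultimately show ?thesis
    by (simp add: poly_subst2_def poly_in_x_def var_x_def)
qed

lemma pderiv_map_poly_const:
  "pderiv (map_poly (\<lambda>c. [:c:]) p) = map_poly (\<lambda>c. [:c:]) (pderiv p)"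
  and pderiv_map_poly_const2:
  "pderiv (map_poly (\<lambda>c. [:[:c:]:]) p) = map_poly (\<lambda>c. [:[:c:]:]) (pderiv p)"
  for p :: "'a::idom poly"
  by (rule poly_eqI, simp add: coeff_pderiv coeff_map_poly of_nat_poly)+

definition ideal2 :: "'a::comm_ring_1 \<Rightarrow> 'a \<Rightarrow> 'a set" where
  "ideal2 f g = {A * f + B * g |A B. True}"

lemma ideal2_iff: "F \<in> ideal2 f g \<longleftrightarrow> (\<exists>A B. F = A * f + B * g)"
  by (simp add: ideal2_def)

lemma ideal2_left [simp]: "f \<in> ideal2 f g"
  and ideal2_right [simp]: "g \<in> ideal2 f g"
  unfolding ideal2_iff by (force intro: exI[of _ 0] exI[of _ 1])+

lemma ideal2_add:
  assumes "F \<in> ideal2 f g" and "G \<in> ideal2 f g"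
  shows "F + G \<in> ideal2 f g"
proof -
  from assms obtain A B A' B' where "F = A * f + B * g" and "G = A' * f + B' * g"
    unfolding ideal2_iff by blast
  then have "F + G = (A + A') * f + (B + B') * g"
    by (simp add: algebra_simps)
  then show ?thesis
    unfolding ideal2_iff by blast
qed

lemma ideal2_mult_left:
  assumes "F \<in> ideal2 f g"
  shows "H * F \<in> ideal2 f g"
proof -
  from assms obtain A B where "F = A * f + B * g"
    unfolding ideal2_iff by blast
  then have "H * F = (H * A) * f + (H * B) * g"
    by (simp add: algebra_simps)
  then show ?thesis
    unfolding ideal2_iff by blast
qed

lemma ideal2_mult_right: "F \<in> ideal2 f g \<Longrightarrow> F * H \<in> ideal2 f g"
  using ideal2_mult_left[of F f g H] by (simp add: mult.commute)

lemma ideal2_diff: "F \<in> ideal2 f g \<Longrightarrow> G \<in> ideal2 f g \<Longrightarrow> F - G \<in> ideal2 f g"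
  using ideal2_add[of F f g "(-1) * G"] ideal2_mult_left[of G f g "-1"] by simp

lemma ideal2_cancel_unipotent:
  assumes "D * (1 - b * w) \<in> ideal2 f (b ^ K)"
  shows "D \<in> ideal2 f (b ^ K)"
proof -
  have "D = D * (1 - b * w) * (\<Sum>i<K. (b * w) ^ i) + D * w ^ K * b ^ K"
    by (simp add: mult.assoc flip: one_diff_power_eq power_mult_distrib) (simp add: algebra_simps)
  also have "\<dots> \<in> ideal2 f (b ^ K)"
    by (intro ideal2_add ideal2_mult_right ideal2_mult_left assms ideal2_right)
  finally show ?thesis .
qed

lemma power_add_in_ideal2: "(a + b) ^ (K + K) \<in> ideal2 (a ^ K) (b ^ K)"
proof -
  define n where "n = K + K"
  define f where "f k = (if K \<le> k then of_nat (n choose k) * a ^ (k - K) * b ^ (n - k) else 0)" for k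
  define g where "g k = (if K \<le> k then 0 else of_nat (n choose k) * a ^ k * b ^ (n - k - K))" for k
  have split: "of_nat (n choose k) * a ^ k * b ^ (n - k) = f k * a ^ K + g k * b ^ K" for k
  proof (cases "K \<le> k")
    case True
    then have "a ^ k = a ^ K * a ^ (k - K)" by (simp flip: power_add)
    with True show ?thesis by (simp add: f_def g_def algebra_simps)
  next
    case False
    then have "b ^ (n - k) = b ^ K * b ^ (n - k - K)" by (simp add: n_def flip: power_add)
    with False show ?thesis by (simp add: f_def g_def algebra_simps)
  qed
  have "(a + b) ^ n = (\<Sum>k\<le>n. f k) * a ^ K + (\<Sum>k\<le>n. g k) * b ^ K"
    by (simp add: binomial_ring split sum.distrib sum_distrib_right)
  then show ?thesis
    unfolding ideal2_iff n_def by blast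
qed

lemma pcompose_add_taylor:
  fixes p :: "'a::idom poly"
  obtains Q where "pcompose p (h + d) = pcompose p h + d * pcompose (pderiv p) h + d * d * Q"
proof -
  have "d * d dvd pcompose p (h + d) - pcompose p h - d * pcompose (pderiv p) h"
    using dvd_poly_add_taylor[of d "map_poly (\<lambda>c. [:c:]) p" h]
    by (simp add: pcompose_altdef pderiv_map_poly_const)
  then obtain Q where "pcompose p (h + d) - pcompose p h - d * pcompose (pderiv p) h = d * d * Q"
    by (elim dvdE)
  then show ?thesis
    by (intro that[of Q]) (simp add: algebra_simps)
qed

lemma dvd_one_minus_pderiv_pcompose:
  fixes P :: "'k::field poly"
  assumes bezout: "u * P + v * pderiv P = 1" and "P dvd h - [:0, 1:]"
  shows "P dvd 1 - pcompose (pderiv P) h * pcompose v h"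
proof -
  have "P dvd pcompose (pderiv P * v) h - pcompose (pderiv P * v) [:0, 1:]"
    using dvd_poly_diff[of h "[:0, 1:]" "map_poly (\<lambda>c. [:c:]) (pderiv P * v)"] assms(2)
    by (simp add: pcompose_altdef dvd_trans)
  then have "P dvd u * P - (pcompose (pderiv P) h * pcompose v h - pderiv P * v)"
    by (simp add: pcompose_mult dvd_diff)
  also have "u * P - (pcompose (pderiv P) h * pcompose v h - pderiv P * v)
      = 1 - pcompose (pderiv P) h * pcompose v h"
    using bezout by (simp add: algebra_simps)
  finally show ?thesis .
qed

lemma newton_iteration:
  fixes P :: "'k::field poly"
  assumes bezout: "u * P + v * pderiv P = 1"
  shows "\<exists>h. P dvd h - [:0, 1:] \<and> P ^ Suc n dvd pcompose P h"
proof (induction n)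
  case 0
  show ?case by (intro exI[of _ "[:0, 1:]"]) simp
next
  case (Suc n)
  then obtain h where h_X: "P dvd h - [:0, 1:]" and P_h: "P ^ Suc n dvd pcompose P h"
    by blast
  \<comment> \<open>Newton correction; \<open>v\<close> inverts \<open>pderiv P\<close> modulo \<open>P\<close>\<close>
  define d where "d = - (pcompose P h * pcompose v h)"
  obtain Q where Q: "pcompose P (h + d) = pcompose P h + d * pcompose (pderiv P) h + d * d * Q"
    by (rule pcompose_add_taylor)
  have "P ^ Suc n * P dvd pcompose P h * (1 - pcompose (pderiv P) h * pcompose v h)"
    by (rule mult_dvd_mono[OF P_h dvd_one_minus_pderiv_pcompose[OF bezout h_X]])
  moreover have "P ^ Suc (Suc n) dvd P ^ Suc n * P ^ Suc n"
    by (simp add: le_imp_power_dvd flip: power_add)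
  then have "P ^ Suc (Suc n) dvd pcompose P h * pcompose P h"
    using mult_dvd_mono[OF P_h P_h] dvd_trans by blast
  moreover have "pcompose P (h + d) = pcompose P h * (1 - pcompose (pderiv P) h * pcompose v h)
      + pcompose P h * pcompose P h * (pcompose v h * pcompose v h * Q)"
    unfolding Q by (simp add: d_def algebra_simps)
  ultimately have "P ^ Suc (Suc n) dvd pcompose P (h + d)"
    by (simp add: dvd_add dvd_mult2 mult.commute)
  moreover have "P dvd d"
    using P_h by (simp add: d_def dvd_mult2 dvd_trans[OF dvd_power[of "Suc n" P]])
  then have "P dvd h + d - [:0, 1:]"
    using h_X by (metis add_diff_eq diff_add_eq dvd_add)
  ultimately show ?case by blast
qed

lemma poly_subst2_add_diff_dvd: "d dvd poly_subst2 p (a + d) - poly_subst2 p a"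
  unfolding poly_subst2_def by (rule dvd_poly_add_diff)

lemma poly_subst2_add_taylor:
  fixes p :: "'a::idom poly"
  obtains Q where "poly_subst2 p (a + d) = poly_subst2 p a + d * poly_subst2 (pderiv p) a + d * d * Q"
proof -
  obtain Q where "poly_subst2 p (a + d) - poly_subst2 p a - d * poly_subst2 (pderiv p) a = d * d * Q"
    using dvd_poly_add_taylor[of d "map_poly (\<lambda>c. [:[:c:]:]) p" a]
    by (auto simp: poly_subst2_def pderiv_map_poly_const2 elim!: dvdE)
  then show ?thesis
    by (intro that[of Q]) (simp add: algebra_simps)
qed

text \<open>\<open>f' + D * Q\<close> is a unit modulo \<open>(f, b\<^sup>K)\<close>: \<open>f'\<close> is a unit modulo \<open>f\<close>, and \<open>D\<close> is
  congruent to a multiple of the nilpotent \<open>b\<close>.\<close>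

lemma ideal2_cancel_bezout:
  fixes D :: "'a::comm_ring_1"
  assumes bezout: "u * f + v * f' = 1"
    and D_G: "D - b * G \<in> ideal2 f (b ^ K)"
    and taylor: "D * f' + D * D * Q \<in> ideal2 f (b ^ K)"
  shows "D \<in> ideal2 f (b ^ K)"
proof -
  let ?I = "ideal2 f (b ^ K)"
  have "v * (D * f' + D * D * Q) + D * u * f \<in> ?I"
    by (rule ideal2_add[OF ideal2_mult_left[OF taylor] ideal2_mult_left[OF ideal2_left]])
  also have "v * (D * f' + D * D * Q) + D * u * f = D * (u * f + v * f') + D * D * (Q * v)"
    by (simp add: algebra_simps)
  finally have "D + D * D * (Q * v) \<in> ?I"
    by (simp add: bezout)
  then have "(D + D * D * (Q * v)) - D * (Q * v) * (D - b * G) \<in> ?I"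
    by (intro ideal2_diff ideal2_mult_left D_G)
  also have "(D + D * D * (Q * v)) - D * (Q * v) * (D - b * G) = D * (1 - b * (- G * Q * v))"
    by (simp add: algebra_simps)
  finally show ?thesis
    by (rule ideal2_cancel_unipotent)
qed

lemma poly_subst2_power_in_ideal2:
  "poly_subst2 P (var_x + var_y) ^ K \<in> ideal2 (poly_in_x P) (var_y ^ K)"
proof -
  obtain G where G: "poly_subst2 P (var_x + var_y) - poly_subst2 P var_x = var_y * G"
    using poly_subst2_add_diff_dvd[of var_y P var_x] by (elim dvdE)
  have "poly_in_x P dvd (var_y * G + poly_in_x P) ^ K - (var_y * G) ^ K"
    using dvd_poly_add_diff[of "poly_in_x P" "monom 1 K" "var_y * G"] by (simp add: poly_monom)
  then obtain R where R: "(var_y * G + poly_in_x P) ^ K - (var_y * G) ^ K = poly_in_x P * R"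
    by (elim dvdE)
  have "poly_subst2 P (var_x + var_y) = var_y * G + poly_in_x P"
    using G by (simp add: poly_subst2_var_x algebra_simps)
  also have "(var_y * G + poly_in_x P) ^ K = R * poly_in_x P + G ^ K * var_y ^ K"
    using R by (simp add: power_mult_distrib algebra_simps eq_diff_eq)
  finally show ?thesis
    unfolding ideal2_iff by blast
qed

lemma hensel_lift_sum:
  fixes P :: "'k::field poly"
  assumes bezout: "u * P + v * pderiv P = 1"
  shows "\<exists>h. poly_subst2 h (var_x + var_y) - var_x \<in> ideal2 (poly_in_x P) (var_y ^ K)"
proof -
  let ?I = "ideal2 (poly_in_x P) (var_y ^ K)"
  obtain h where h_X: "P dvd h - [:0, 1:]" and P_h: "P ^ Suc K dvd pcompose P h"
    using newton_iteration[OF bezout] by blast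
  define D where "D = poly_subst2 h (var_x + var_y) - var_x"
  obtain G where "poly_subst2 h (var_x + var_y) - poly_subst2 h var_x = var_y * G"
    using poly_subst2_add_diff_dvd[of var_y h var_x] by (elim dvdE)
  moreover obtain q where "h - [:0, 1:] = P * q"
    using h_X by (elim dvdE)
  then have "poly_subst2 h var_x - var_x = poly_in_x q * poly_in_x P"
    by (subst poly_subst2_var_x)
      (simp add: var_x_poly_in_x mult.commute flip: poly_in_x_diff poly_in_x_mult)
  ultimately have "D - var_y * G = poly_in_x q * poly_in_x P"
    by (simp add: D_def algebra_simps)
  then have D_G: "D - var_y * G \<in> ?I"
    by (simp add: ideal2_mult_left)
  obtain Q where Q: "poly_subst2 P (var_x + D) = poly_in_x P + D * poly_in_x (pderiv P) + D * D * Q"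
    using poly_subst2_add_taylor[of P var_x D] by (auto simp: poly_subst2_var_x)
  have "P ^ K dvd P ^ Suc K"
    by (rule le_imp_power_dvd) simp
  then have "P ^ K dvd pcompose P h"
    using P_h by (rule dvd_trans)
  then obtain g where "pcompose P h = P ^ K * g"
    by (elim dvdE)
  then have "poly_subst2 P (var_x + D) \<in> ?I"
    by (simp add: D_def poly_subst2_mult poly_subst2_power ideal2_mult_right
        poly_subst2_power_in_ideal2 flip: poly_subst2_pcompose)
  from ideal2_diff[OF this ideal2_left] have taylor: "D * poly_in_x (pderiv P) + D * D * Q \<in> ?I"
    by (simp add: Q)
  have "poly_in_x u * poly_in_x P + poly_in_x v * poly_in_x (pderiv P) = 1"
    using arg_cong[OF bezout, of poly_in_x] by (simp add: poly_in_x_add poly_in_x_mult poly_in_x_1)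
  from ideal2_cancel_bezout[OF this D_G taylor] have "D \<in> ?I" .
  then show ?thesis
    unfolding D_def by blast
qed

section \<open>Polynomials in two commuting endomorphisms\<close>

definition poly2_endo ::
  "('k::field \<Rightarrow> 'v::ab_group_add \<Rightarrow> 'v) \<Rightarrow> 'k poly poly \<Rightarrow> ('v \<Rightarrow> 'v) \<Rightarrow> ('v \<Rightarrow> 'v) \<Rightarrow> 'v \<Rightarrow> 'v"
  where "poly2_endo scale F T U v = (\<Sum>j\<le>degree F. poly_endo scale (coeff F j) T ((U ^^ j) v))"

locale commuting_endos = vector_space scale for scale :: "'k::field \<Rightarrow> 'v::ab_group_add \<Rightarrow> 'v" +
  fixes T U :: "'v \<Rightarrow> 'v"
  assumes linear_T: "Vector_Spaces.linear scale scale T"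
    and linear_U: "Vector_Spaces.linear scale scale U"
    and commute: "T (U v) = U (T v)"
begin

lemma U_poly_endo_T: "U (poly_endo scale c T v) = poly_endo scale c T (U v)"
  by (rule poly_endo_commute[OF linear_T linear_U]) (simp add: commute)

lemma poly2_endo_eq_sum_lessThan:
  assumes "degree F < n"
  shows "poly2_endo scale F T U v = (\<Sum>j<n. poly_endo scale (coeff F j) T ((U ^^ j) v))"
proof -
  have "poly2_endo scale F T U v
      = (\<Sum>j<Suc (degree F). poly_endo scale (coeff F j) T ((U ^^ j) v))"
    unfolding poly2_endo_def by (simp add: lessThan_Suc_atMost)
  also have "\<dots> = (\<Sum>j<n. poly_endo scale (coeff F j) T ((U ^^ j) v))"
    by (rule sum.mono_neutral_left) (use assms in \<open>auto simp: coeff_eq_0\<close>)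
  finally show ?thesis .
qed

lemma poly2_endo_0 [simp]: "poly2_endo scale 0 T U v = 0"
  by (simp add: poly2_endo_def)

lemma poly2_endo_1 [simp]: "poly2_endo scale 1 T U v = v"
  by (simp add: poly2_endo_def)

lemma poly2_endo_poly_in_x [simp]: "poly2_endo scale (poly_in_x c) T U v = poly_endo scale c T v"
  by (simp add: poly2_endo_def poly_in_x_def)

lemma poly2_endo_pCons:
  "poly2_endo scale (pCons c F) T U v = poly_endo scale c T v + U (poly2_endo scale F T U v)"
proof -
  define n where "n = Suc (degree F)"
  have "poly2_endo scale (pCons c F) T U v
      = (\<Sum>j<Suc n. poly_endo scale (coeff (pCons c F) j) T ((U ^^ j) v))"
    by (rule poly2_endo_eq_sum_lessThan) (simp add: n_def degree_pCons_le le_imp_less_Suc)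
  also have "\<dots> = poly_endo scale c T v + (\<Sum>j<n. U (poly_endo scale (coeff F j) T ((U ^^ j) v)))"
    by (subst sum.lessThan_Suc_shift) (simp add: U_poly_endo_T)
  also have "(\<Sum>j<n. U (poly_endo scale (coeff F j) T ((U ^^ j) v)))
      = U (\<Sum>j<n. poly_endo scale (coeff F j) T ((U ^^ j) v))"
    by (rule endo.linear_sum[OF linear_U, symmetric])
  also have "(\<Sum>j<n. poly_endo scale (coeff F j) T ((U ^^ j) v)) = poly2_endo scale F T U v"
    by (rule poly2_endo_eq_sum_lessThan[symmetric]) (simp add: n_def)
  finally show ?thesis .
qed

lemma poly2_endo_add:
  "poly2_endo scale (F + G) T U v = poly2_endo scale F T U v + poly2_endo scale G T U v"
proof -
  define n where "n = Suc (max (degree F) (degree G))"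
  have "degree (F + G) < n" "degree F < n" "degree G < n"
    using degree_add_le_max[of F G] by (auto simp: n_def)
  then show ?thesis
    by (simp add: poly2_endo_eq_sum_lessThan poly_endo_add sum.distrib)
qed

lemma poly2_endo_diff:
  "poly2_endo scale (F - G) T U v = poly2_endo scale F T U v - poly2_endo scale G T U v"
  using poly2_endo_add[of "F - G" G v] by (simp add: eq_diff_eq)

lemma linear_poly2_endo: "Vector_Spaces.linear scale scale (poly2_endo scale F T U)"
proof -
  have "poly2_endo scale F T U (x + y) = poly2_endo scale F T U x + poly2_endo scale F T U y" for x y
    by (induction F arbitrary: x y)
      (simp_all add: poly2_endo_pCons endo.linear_add[OF linear_poly_endo[OF linear_T]]
        endo.linear_add[OF linear_U] ac_simps)
  moreover have "poly2_endo scale F T U (scale c x) = scale c (poly2_endo scale F T U x)" for c x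
    by (induction F arbitrary: x)
      (simp_all add: poly2_endo_pCons endo.linear_scale[OF linear_poly_endo[OF linear_T]]
        endo.linear_scale[OF linear_U] scale_right_distrib)
  ultimately show ?thesis
    by (simp add: Vector_Spaces.linear_iff vector_space_axioms)
qed

lemma poly2_endo_smult:
  "poly2_endo scale (smult c F) T U v = poly_endo scale c T (poly2_endo scale F T U v)"
  by (induction F arbitrary: v)
    (simp_all add: poly2_endo_pCons poly_endo_mult[OF linear_T] U_poly_endo_T
      endo.linear_0[OF linear_poly_endo[OF linear_T]]
      endo.linear_add[OF linear_poly_endo[OF linear_T]])

lemma poly2_endo_mult:
  "poly2_endo scale (F * G) T U v = poly2_endo scale F T U (poly2_endo scale G T U v)"
  by (induction F arbitrary: v) (simp_all add: poly2_endo_add poly2_endo_smult poly2_endo_pCons)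

lemma poly2_endo_power: "poly2_endo scale (F ^ n) T U v = (poly2_endo scale F T U ^^ n) v"
  by (induction n arbitrary: v) (simp_all add: poly2_endo_mult)

lemma poly2_endo_var_x [simp]: "poly2_endo scale var_x T U = T"
  by (simp add: fun_eq_iff var_x_poly_in_x poly_endo_X[OF linear_T])

lemma poly2_endo_var_y [simp]: "poly2_endo scale var_y T U = U"
  by (simp add: fun_eq_iff var_y_def poly2_endo_pCons endo.linear_0[OF linear_U] flip: one_pCons)

lemma poly2_endo_poly_in_y [simp]: "poly2_endo scale (poly_in_y c) T U v = poly_endo scale c U v"
  by (induction c arbitrary: v)
    (simp_all add: poly_in_y_def map_poly_pCons poly2_endo_pCons poly_endo_pCons[OF linear_U])

lemma poly2_endo_poly_subst2:
  "poly2_endo scale (poly_subst2 P F) T U v = poly_endo scale P (poly2_endo scale F T U) v"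
proof (induction P arbitrary: v)
  case (pCons a P)
  have "poly2_endo scale (poly_subst2 (pCons a P) F) T U v
      = poly2_endo scale (poly_in_x [:a:] + F * poly_subst2 P F) T U v"
    by (simp add: poly_subst2_def map_poly_pCons poly_in_x_def)
  also have "\<dots> = poly_endo scale (pCons a P) (poly2_endo scale F T U) v"
    by (simp add: poly2_endo_add poly2_endo_mult pCons.IH poly_endo_pCons[OF linear_poly2_endo])
  finally show ?case .
qed (simp add: poly_subst2_def)

lemma poly2_endo_sum_vars: "poly2_endo scale (var_x + var_y) T U = (\<lambda>v. T v + U v)"
  by (simp add: fun_eq_iff poly2_endo_add)

lemma poly2_endo_ideal2_eq_0:
  assumes "F \<in> ideal2 f g" and "poly2_endo scale f T U v = 0" and "poly2_endo scale g T U v = 0"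
  shows "poly2_endo scale F T U v = 0"
proof -
  obtain A B where "F = A * f + B * g"
    using assms(1) unfolding ideal2_iff by blast
  then show ?thesis
    using assms(2,3) endo.linear_0[OF linear_poly2_endo]
    by (simp add: poly2_endo_add poly2_endo_mult)
qed

lemma linear_sum: "Vector_Spaces.linear scale scale (\<lambda>v. T v + U v)"
  using linear_poly2_endo[of "var_x + var_y"] by (simp add: poly2_endo_sum_vars)

lemma poly_endo_sum_eq_poly2_endo:
  "poly_endo scale P (\<lambda>v. T v + U v) v = poly2_endo scale (poly_subst2 P (var_x + var_y)) T U v"
  by (simp add: poly2_endo_poly_subst2 poly2_endo_sum_vars)

lemma poly_endo_sum_eq_0:
  assumes "poly_subst2 P (var_x + var_y) \<in> ideal2 (poly_in_x p) (poly_in_y p)"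
    and "poly_endo scale p T v = 0" and "poly_endo scale p U v = 0"
  shows "poly_endo scale P (\<lambda>v. T v + U v) v = 0"
  using poly2_endo_ideal2_eq_0[OF assms(1)] assms(2,3) by (simp add: poly_endo_sum_eq_poly2_endo)

lemma funpow_sum_eq_0:
  assumes "(T ^^ K) v = 0" and "(U ^^ K) v = 0"
  shows "((\<lambda>v. T v + U v) ^^ (K + K)) v = 0"
  using poly2_endo_ideal2_eq_0[OF power_add_in_ideal2[of var_x var_y K]] assms
  by (simp add: poly2_endo_power poly2_endo_sum_vars)

lemma poly_endo_sum_eq_left:
  assumes "r * P + s * pderiv P = 1"
  obtains h where
    "\<And>v. poly_endo scale P T v = 0 \<Longrightarrow> (U ^^ K) v = 0 \<Longrightarrow> poly_endo scale h (\<lambda>v. T v + U v) v = T v"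
proof -
  obtain h where h: "poly_subst2 h (var_x + var_y) - var_x \<in> ideal2 (poly_in_x P) (var_y ^ K)"
    using hensel_lift_sum[OF assms] by blast
  have "poly_endo scale h (\<lambda>v. T v + U v) v = T v"
    if "poly_endo scale P T v = 0" and "(U ^^ K) v = 0" for v
  proof -
    have "poly2_endo scale (poly_subst2 h (var_x + var_y) - var_x) T U v = 0"
      by (rule poly2_endo_ideal2_eq_0[OF h]) (simp_all add: that poly2_endo_power)
    then show ?thesis
      by (simp add: poly2_endo_diff poly_endo_sum_eq_poly2_endo)
  qed
  then show ?thesis
    using that by blast
qed

end

section \<open>Separable polynomials and the algebraic closure\<close>

lemma poly_bezout_divisor:
  fixes a b :: "'k::field poly"
  assumes "a \<noteq> 0"
  obtains r s where "r * a + s * b dvd a" and "r * a + s * b dvd b"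
proof -
  define comb where "comb g \<longleftrightarrow> g \<noteq> 0 \<and> (\<exists>r s. g = r * a + s * b)" for g
  have "comb a"
    unfolding comb_def using assms by (intro conjI exI[of _ 1] exI[of _ 0]) simp_all
  then obtain g where "comb g" and g_min: "\<And>f. comb f \<Longrightarrow> degree g \<le> degree f"
    using ex_has_least_nat[of comb a degree] by blast
  then obtain r s where g: "g = r * a + s * b" and "g \<noteq> 0"
    unfolding comb_def by blast
  have "g dvd r' * a + s' * b" for r' s'
  proof (rule ccontr)
    assume "\<not> g dvd r' * a + s' * b"
    then have "(r' * a + s' * b) mod g \<noteq> 0"
      by (simp add: mod_eq_0_iff_dvd)
    moreover have "(r' * a + s' * b) mod g
        = (r' - (r' * a + s' * b) div g * r) * a + (s' - (r' * a + s' * b) div g * s) * b"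
    proof -
      define q where "q = (r' * a + s' * b) div g"
      have "(r' * a + s' * b) mod g = r' * a + s' * b - q * g"
        unfolding q_def by (rule minus_div_mult_eq_mod[symmetric])
      also have "\<dots> = (r' - q * r) * a + (s' - q * s) * b"
        unfolding g by (simp add: algebra_simps)
      finally show ?thesis
        by (simp only: q_def)
    qed
    ultimately have "degree g \<le> degree ((r' * a + s' * b) mod g)"
      using g_min unfolding comb_def by blast
    with degree_mod_less'[OF \<open>g \<noteq> 0\<close> \<open>(r' * a + s' * b) mod g \<noteq> 0\<close>] show False
      by simp
  qed
  from this[of 1 0] this[of 0 1] show ?thesis
    using that g by simp
qed

lemma coprime_imp_bezout:
  fixes a b :: "'k::field poly"
  assumes "coprime a b"
  obtains r s where "r * a + s * b = 1"
proof (cases "a = 0")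
  case True
  with assms obtain s where "1 = b * s"
    by (auto elim: dvdE)
  then show ?thesis
    using that[of 0 s] by (simp add: mult.commute)
next
  case False
  then obtain r s where "r * a + s * b dvd a" and "r * a + s * b dvd b"
    by (rule poly_bezout_divisor)
  with assms have "is_unit (r * a + s * b)"
    by (rule coprime_common_divisor)
  then obtain w where "1 = (r * a + s * b) * w"
    by (elim dvdE)
  then show ?thesis
    using that[of "w * r" "w * s"] by (simp add: algebra_simps)
qed

lemma map_poly_to_ac_add: "map_poly to_ac (p + q) = map_poly to_ac p + map_poly to_ac q"
  by (rule map_poly_additive) simp_all

lemma map_poly_to_ac_mult: "map_poly to_ac (p * q) = map_poly to_ac p * map_poly to_ac q"
  by (rule map_poly_multiplicative) simp_all

lemma map_poly_to_ac_pderiv: "map_poly to_ac (pderiv p) = pderiv (map_poly to_ac p)"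
  by (rule poly_eqI) (simp add: coeff_pderiv coeff_map_poly)

lemma degree_map_poly_to_ac [simp]: "degree (map_poly to_ac p) = degree p"
  by (simp add: degree_map_poly)

lemma map_poly_to_ac_eq_0_iff [simp]: "map_poly to_ac p = 0 \<longleftrightarrow> p = 0"
  by (simp add: map_poly_eq_0_iff)

lemma coprime_if_no_common_root_ac:
  fixes p q :: "'k::field poly"
  assumes "p \<noteq> 0"
    and no_common_root: "\<And>\<beta>. poly (map_poly to_ac p) \<beta> = 0 \<Longrightarrow> poly (map_poly to_ac q) \<beta> \<noteq> 0"
  shows "coprime p q"
proof (rule coprimeI)
  fix c
  assume "c dvd p" and "c dvd q"
  show "is_unit c"
  proof (rule ccontr)
    assume "\<not> is_unit c"
    moreover have "c \<noteq> 0"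
      using \<open>c dvd p\<close> assms(1) by auto
    ultimately have "degree (map_poly to_ac c) > 0"
      by (simp add: is_unit_iff_degree)
    then obtain \<beta> where "poly (map_poly to_ac c) \<beta> = 0"
      using alg_closed_imp_poly_has_root by blast
    moreover obtain p' q' where "p = c * p'" and "q = c * q'"
      using \<open>c dvd p\<close> \<open>c dvd q\<close> by (elim dvdE)
    ultimately show False
      using no_common_root[of \<beta>] by (simp add: map_poly_to_ac_mult)
  qed
qed

lemma coprime_pderiv_iff_rsquarefree_ac:
  fixes p :: "'k::field_char_0 poly"
  shows "coprime p (pderiv p) \<longleftrightarrow> rsquarefree (map_poly to_ac p)"
proof
  assume "coprime p (pderiv p)"
  then obtain r s where bezout: "r * p + s * pderiv p = 1"
    by (rule coprime_imp_bezout)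
  have "poly (map_poly to_ac r) \<beta> * poly (map_poly to_ac p) \<beta>
      + poly (map_poly to_ac s) \<beta> * poly (pderiv (map_poly to_ac p)) \<beta> = 1" for \<beta>
    using arg_cong[OF bezout, of "\<lambda>f. poly (map_poly to_ac f) \<beta>"]
    by (simp add: map_poly_to_ac_add map_poly_to_ac_mult map_poly_to_ac_pderiv)
  then show "rsquarefree (map_poly to_ac p)"
    unfolding rsquarefree_roots by (metis mult_zero_right add_0 zero_neq_one)
next
  assume "rsquarefree (map_poly to_ac p)"
  then show "coprime p (pderiv p)"
    by (intro coprime_if_no_common_root_ac)
      (auto simp: rsquarefree_roots rsquarefree_def map_poly_to_ac_pderiv)
qed

lemma rsquarefree_linear_factorD:
  fixes q :: "'a::idom poly"
  assumes "rsquarefree ([:-x, 1:] * q)"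
  shows "rsquarefree q" and "poly q x \<noteq> 0"
proof -
  have "[:-x, 1:] * q \<noteq> 0"
    using assms by (simp add: rsquarefree_def)
  then have "q \<noteq> 0"
    by auto
  have order: "order a ([:-x, 1:] * q) = order a [:-x, 1:] + order a q" for a
    using \<open>[:-x, 1:] * q \<noteq> 0\<close> by (rule order_mult)
  have order_le_1: "order a ([:-x, 1:] * q) = 0 \<or> order a ([:-x, 1:] * q) = 1" for a
    using assms by (simp add: rsquarefree_def)
  have "order a q = 0 \<or> order a q = 1" for a
    using order[of a] order_le_1[of a] by auto
  with \<open>q \<noteq> 0\<close> show "rsquarefree q"
    by (simp add: rsquarefree_def)
  have "order x [:-x, 1:] = 1"
    using order_power_n_n[of x 1] by simp
  then have "order x q = 0"
    using order[of x] order_le_1[of x] by auto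
  with \<open>q \<noteq> 0\<close> show "poly q x \<noteq> 0"
    by (simp add: order_root)
qed

lemma card_roots_rsquarefree:
  fixes p :: "'a::alg_closed_field poly"
  assumes "rsquarefree p"
  shows "card {x. poly p x = 0} = degree p"
  using assms
proof (induction "degree p" arbitrary: p rule: less_induct)
  case (less p)
  have "p \<noteq> 0"
    using less.prems by (simp add: rsquarefree_def)
  show ?case
  proof (cases "degree p = 0")
    case True
    with \<open>p \<noteq> 0\<close> show ?thesis
      by (auto elim!: degree_eq_zeroE)
  next
    case False
    then obtain x where "poly p x = 0"
      using alg_closed_imp_poly_has_root by blast
    then obtain q where p_eq: "p = [:-x, 1:] * q"
      by (auto simp: poly_eq_0_iff_dvd elim!: dvdE)
    with \<open>p \<noteq> 0\<close> have "q \<noteq> 0"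
      by auto
    note q = rsquarefree_linear_factorD[OF less.prems[unfolded p_eq]]
    have "{a. poly p a = 0} = insert x {a. poly q a = 0}"
      by (auto simp: p_eq)
    moreover have "degree p = Suc (degree q)"
      using \<open>q \<noteq> 0\<close> unfolding p_eq by (subst degree_mult_eq) auto
    ultimately show ?thesis
      using less.hyps[of q] q poly_roots_finite[OF \<open>q \<noteq> 0\<close>] by simp
  qed
qed

lemma separable_poly_with_same_roots_ac:
  fixes f :: "'k::field_char_0 poly"
  assumes "f \<noteq> 0"
  obtains q where "coprime q (pderiv q)"
    and "\<And>\<beta>. poly (map_poly to_ac q) \<beta> = 0 \<longleftrightarrow> poly (map_poly to_ac f) \<beta> = 0"
proof (cases "pderiv f = 0")
  case True
  then obtain c where "f = [:c:]"
    using pderiv_iszero by blast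
  with assms show ?thesis
    by (intro that[of 1]) simp_all
next
  case False
  \<comment> \<open>\<open>q\<close> is the squarefree part \<open>f / gcd f (pderiv f)\<close>\<close>
  obtain r s where "r * f + s * pderiv f dvd f" and "r * f + s * pderiv f dvd pderiv f"
    using poly_bezout_divisor[OF assms] by blast
  then obtain q e where f_eq: "f = q * (r * f + s * pderiv f)"
    and f'_eq: "pderiv f = e * (r * f + s * pderiv f)"
    by (metis dvdE mult.commute)
  have "rsquarefree (map_poly to_ac q)
      \<and> (\<forall>\<beta>. poly (map_poly to_ac q) \<beta> = 0 \<longleftrightarrow> poly (map_poly to_ac f) \<beta> = 0)"
  proof (rule poly_squarefree_decomp)
    show "pderiv (map_poly to_ac f) \<noteq> 0"
      using False by (simp flip: map_poly_to_ac_pderiv)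
    show "map_poly to_ac f = map_poly to_ac q * map_poly to_ac (r * f + s * pderiv f)"
      using arg_cong[OF f_eq, of "map_poly to_ac"] by (simp only: map_poly_to_ac_mult)
    show "pderiv (map_poly to_ac f) = map_poly to_ac e * map_poly to_ac (r * f + s * pderiv f)"
      using arg_cong[OF f'_eq, of "map_poly to_ac"] by (simp only: map_poly_to_ac_mult map_poly_to_ac_pderiv)
    show "map_poly to_ac (r * f + s * pderiv f)
        = map_poly to_ac r * map_poly to_ac f + map_poly to_ac s * pderiv (map_poly to_ac f)"
      by (simp only: map_poly_to_ac_add map_poly_to_ac_mult map_poly_to_ac_pderiv)
  qed
  then show ?thesis
    by (intro that[of q]) (simp_all add: coprime_pderiv_iff_rsquarefree_ac)
qed

lemma exists_poly_vanishing_on_finite_ac: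
  fixes A :: "'k::field alg_closure set"
  assumes "finite A"
  shows "\<exists>f. f \<noteq> 0 \<and> (\<forall>\<alpha>\<in>A. poly (map_poly to_ac f) \<alpha> = 0)"
  using assms
proof (induction A rule: finite_induct)
  case empty
  show ?case by (intro exI[of _ 1]) simp
next
  case (insert \<alpha> A)
  then obtain f where "f \<noteq> 0" and f: "\<forall>\<gamma>\<in>A. poly (map_poly to_ac f) \<gamma> = 0"
    by blast
  moreover obtain g :: "'k poly" where "g \<noteq> 0" and "poly (map_poly to_ac g) \<alpha> = 0"
    by (rule alg_closure_algebraic)
  ultimately show ?case
    by (intro exI[of _ "f * g"]) (simp add: map_poly_to_ac_mult)
qed

definition poly2_eval :: "'k::field alg_closure \<Rightarrow> 'k alg_closure \<Rightarrow> 'k poly poly \<Rightarrow> 'k alg_closure"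
  where "poly2_eval \<alpha> \<beta> F = poly (map_poly (\<lambda>c. poly (map_poly to_ac c) \<alpha>) F) \<beta>"

lemma poly2_eval_add: "poly2_eval \<alpha> \<beta> (F + G) = poly2_eval \<alpha> \<beta> F + poly2_eval \<alpha> \<beta> G"
  unfolding poly2_eval_def by (subst map_poly_additive) (simp_all add: map_poly_to_ac_add)

lemma poly2_eval_mult: "poly2_eval \<alpha> \<beta> (F * G) = poly2_eval \<alpha> \<beta> F * poly2_eval \<alpha> \<beta> G"
  unfolding poly2_eval_def
  by (subst map_poly_multiplicative) (simp_all add: map_poly_to_ac_add map_poly_to_ac_mult)

lemma poly2_eval_poly_in_x [simp]: "poly2_eval \<alpha> \<beta> (poly_in_x p) = poly (map_poly to_ac p) \<alpha>"
  by (simp add: poly2_eval_def poly_in_x_def)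

lemma poly2_eval_poly_in_y [simp]: "poly2_eval \<alpha> \<beta> (poly_in_y p) = poly (map_poly to_ac p) \<beta>"
  by (simp add: poly2_eval_def poly_in_y_def map_poly_map_poly o_def)

lemma poly2_eval_var_x [simp]: "poly2_eval \<alpha> \<beta> var_x = \<alpha>"
  and poly2_eval_var_y [simp]: "poly2_eval \<alpha> \<beta> var_y = \<beta>"
  by (simp_all add: poly2_eval_def var_x_def var_y_def map_poly_pCons)

lemma poly2_eval_poly_subst2:
  "poly2_eval \<alpha> \<beta> (poly_subst2 P w) = poly (map_poly to_ac P) (poly2_eval \<alpha> \<beta> w)"
proof -
  have "poly2_eval \<alpha> \<beta> (poly (map_poly (\<lambda>c. [:[:c:]:]) P) w)
      = poly (map_poly (\<lambda>c. poly2_eval \<alpha> \<beta> [:[:c:]:]) P) (poly2_eval \<alpha> \<beta> w)"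
    by (rule poly_map_poly_ring_hom) (simp_all add: poly2_eval_add poly2_eval_mult,
        simp add: poly2_eval_def)
  moreover have "(\<lambda>c. poly2_eval \<alpha> \<beta> [:[:c:]:]) = to_ac"
    by (simp add: fun_eq_iff poly2_eval_def)
  ultimately show ?thesis
    by (simp add: poly_subst2_def)
qed

lemma poly2_eq_0_if_vanishes_ac:
  fixes F :: "'k::field poly poly" and R :: "'k alg_closure set"
  assumes "degree F < card R" and "\<And>j. degree (coeff F j) < card R"
    and vanish: "\<And>\<alpha> \<beta>. \<alpha> \<in> R \<Longrightarrow> \<beta> \<in> R \<Longrightarrow> poly2_eval \<alpha> \<beta> F = 0"
  shows "F = 0"
proof -
  have "poly (map_poly to_ac (coeff F j)) \<alpha> = 0" if "\<alpha> \<in> R" for \<alpha> j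
  proof -
    have "map_poly (\<lambda>c. poly (map_poly to_ac c) \<alpha>) F = 0"
      by (rule poly_eqI_degree[of R])
        (use assms(1) vanish[OF that] map_poly_degree_leq[of _ F] in
          \<open>auto simp: poly2_eval_def intro: le_less_trans\<close>)
    then show ?thesis
      by (metis coeff_0 coeff_map_poly map_poly_0 poly_0)
  qed
  moreover have "card R > 0"
    using assms(1) by simp
  ultimately have "map_poly to_ac (coeff F j) = 0" for j
    by (intro poly_eqI_degree[of R]) (use assms(2) in auto)
  then show ?thesis
    by (simp add: poly_eqI)
qed

lemma reduce_mod_ideal2_poly_in_xy:
  fixes p :: "'k::field poly" and F :: "'k poly poly"
  assumes monic: "lead_coeff p = 1" and "degree p > 0"
  obtains A B r where "F = A * poly_in_x p + B * poly_in_y p + r"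
    and "degree r < degree p" and "\<And>j. degree (coeff r j) < degree p"
proof -
  have "p \<noteq> 0"
    using monic by auto
  have lead_coeff_y: "lead_coeff (poly_in_y p) = 1" and degree_y: "degree (poly_in_y p) = degree p"
    using monic by (simp_all add: poly_in_y_def degree_map_poly coeff_map_poly one_pCons)
  then have "poly_in_y p \<noteq> 0"
    by auto
  obtain q r where qr: "pseudo_divmod F (poly_in_y p) = (q, r)"
    by (cases "pseudo_divmod F (poly_in_y p)") auto
  have F_qr: "F = poly_in_y p * q + r"
    using pseudo_divmod(1)[OF \<open>poly_in_y p \<noteq> 0\<close> qr] lead_coeff_y by simp
  have "degree r < degree p"
    using pseudo_divmod(2)[OF \<open>poly_in_y p \<noteq> 0\<close> qr] degree_y assms(2) by auto
  define r' where "r' = map_poly (\<lambda>c. c mod p) r"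
  define G where "G = map_poly (\<lambda>c. c div p) r"
  have "r = r' + poly_in_x p * G"
    by (rule poly_eqI) (simp add: r'_def G_def coeff_map_poly poly_in_x_def)
  then have "F = G * poly_in_x p + q * poly_in_y p + r'"
    using F_qr by (simp add: algebra_simps)
  moreover have "degree r' < degree p"
    using \<open>degree r < degree p\<close> map_poly_degree_leq[of "\<lambda>c. c mod p" r] by (simp add: r'_def)
  moreover have "degree (coeff r' j) < degree p" for j
    using degree_mod_less'[OF \<open>p \<noteq> 0\<close>, of "coeff r j"] assms(2)
    by (cases "coeff r j mod p = 0") (auto simp: r'_def coeff_map_poly)
  ultimately show ?thesis
    by (rule that)
qed

lemma ideal2_if_vanishes_on_roots_ac:
  fixes p :: "'k::field_char_0 poly" and F :: "'k poly poly"
  assumes monic: "lead_coeff p = 1" and sep: "coprime p (pderiv p)"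
    and vanish: "\<And>\<alpha> \<beta>. poly (map_poly to_ac p) \<alpha> = 0 \<Longrightarrow> poly (map_poly to_ac p) \<beta> = 0
      \<Longrightarrow> poly2_eval \<alpha> \<beta> F = 0"
  shows "F \<in> ideal2 (poly_in_x p) (poly_in_y p)"
proof (cases "degree p = 0")
  case True
  with monic have "poly_in_x p = 1"
    by (auto simp: poly_in_x_def one_pCons elim!: degree_eq_zeroE)
  then show ?thesis
    unfolding ideal2_iff by (intro exI[of _ F] exI[of _ 0]) simp
next
  case False
  define R where "R = {\<alpha>. poly (map_poly to_ac p) \<alpha> = 0}"
  have card_R: "card R = degree p"
    using card_roots_rsquarefree[of "map_poly to_ac p"] sep
    by (simp add: R_def coprime_pderiv_iff_rsquarefree_ac)
  obtain A B r where F_eq: "F = A * poly_in_x p + B * poly_in_y p + r"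
    and "degree r < degree p" and "\<And>j. degree (coeff r j) < degree p"
    using reduce_mod_ideal2_poly_in_xy[OF monic] False by blast
  then have "r = 0"
  proof (intro poly2_eq_0_if_vanishes_ac[of _ R])
    show "poly2_eval \<alpha> \<beta> r = 0" if "\<alpha> \<in> R" "\<beta> \<in> R" for \<alpha> \<beta>
      using vanish[of \<alpha> \<beta>] that arg_cong[OF F_eq, of "poly2_eval \<alpha> \<beta>"]
      by (simp add: R_def poly2_eval_add poly2_eval_mult)
  qed (simp_all add: card_R)
  with F_eq show ?thesis
    unfolding ideal2_iff by auto
qed

lemma separable_poly_at_sum_in_ideal2:
  fixes p :: "'k::field_char_0 poly"
  assumes monic: "lead_coeff p = 1" and sep: "coprime p (pderiv p)"
  obtains P where "coprime P (pderiv P)"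
    and "poly_subst2 P (var_x + var_y) \<in> ideal2 (poly_in_x p) (poly_in_y p)"
proof -
  define R where "R = {\<alpha>. poly (map_poly to_ac p) \<alpha> = 0}"
  have "p \<noteq> 0"
    using monic by auto
  then have "finite R"
    unfolding R_def by (intro poly_roots_finite) simp
  then obtain f where "f \<noteq> 0"
    and f: "\<And>\<alpha> \<beta>. \<alpha> \<in> R \<Longrightarrow> \<beta> \<in> R \<Longrightarrow> poly (map_poly to_ac f) (\<alpha> + \<beta>) = 0"
    using exists_poly_vanishing_on_finite_ac[of "(\<lambda>(\<alpha>, \<beta>). \<alpha> + \<beta>) ` (R \<times> R)"] by auto
  obtain P where "coprime P (pderiv P)"
    and roots: "\<And>\<gamma>. poly (map_poly to_ac P) \<gamma> = 0 \<longleftrightarrow> poly (map_poly to_ac f) \<gamma> = 0"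
    using separable_poly_with_same_roots_ac[OF \<open>f \<noteq> 0\<close>] by blast
  have "poly_subst2 P (var_x + var_y) \<in> ideal2 (poly_in_x p) (poly_in_y p)"
    by (rule ideal2_if_vanishes_on_roots_ac[OF monic sep])
      (simp add: poly2_eval_poly_subst2 poly2_eval_add roots f R_def)
  with \<open>coprime P (pderiv P)\<close> show ?thesis
    by (rule that)
qed

lemma coprime_if_bezout: "r * a + s * b = 1 \<Longrightarrow> coprime a b"
  by (rule coprimeI) (metis dvd_add dvd_mult)

lemma semisimple_endoE_monic:
  assumes "vector_space scale" and "semisimple_endo scale S"
  obtains p where "lead_coeff p = 1" and "coprime p (pderiv p)" and "poly_endo scale p S = (\<lambda>_. 0)"
proof -
  obtain q where "q \<noteq> 0" and "coprime q (pderiv q)" and qS: "poly_endo scale q S = (\<lambda>_. 0)"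
    using assms(2) unfolding semisimple_endo_def by blast
  define c where "c = lead_coeff q"
  then have "c \<noteq> 0"
    using \<open>q \<noteq> 0\<close> by simp
  obtain r s where "r * q + s * pderiv q = 1"
    using \<open>coprime q (pderiv q)\<close> by (rule coprime_imp_bezout)
  then have "smult c r * smult (inverse c) q + smult c s * pderiv (smult (inverse c) q) = 1"
    using \<open>c \<noteq> 0\<close> by (simp add: pderiv_smult)
  moreover have "lead_coeff (smult (inverse c) q) = 1"
    using \<open>c \<noteq> 0\<close> by (simp add: c_def)
  moreover have "poly_endo scale (smult (inverse c) q) S = (\<lambda>_. 0)"
  proof -
    interpret vector_space scale
      by (rule assms(1))
    show ?thesis
      using qS by (simp add: fun_eq_iff poly_endo_smult)
  qed
  ultimately show ?thesis
    using that coprime_if_bezout by blast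
qed

section \<open>Composition operators on the space of maps\<close>

text \<open>Operators such as \<open>Z \<mapsto> Z \<circ> S\<close> act on all maps \<open>'v \<Rightarrow> 'v\<close>, not just on the linear ones;
  they satisfy the polynomial relations of \<open>S\<close> only on linear \<open>Z\<close>, hence the linearity
  hypotheses below.\<close>

definition fun_scale :: "('k \<Rightarrow> 'v \<Rightarrow> 'v) \<Rightarrow> 'k \<Rightarrow> ('a \<Rightarrow> 'v) \<Rightarrow> 'a \<Rightarrow> 'v" where
  "fun_scale scale c f = (\<lambda>x. scale c (f x))"

lemma fun_scale_apply [simp]: "fun_scale scale c f x = scale c (f x)"
  by (simp add: fun_scale_def)

lemma vector_space_fun_scale:
  "vector_space scale \<Longrightarrow> vector_space (fun_scale scale :: 'k::field \<Rightarrow> ('a \<Rightarrow> 'v::ab_group_add) \<Rightarrow> _)"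
  unfolding vector_space_def fun_scale_def by (simp add: fun_eq_iff)

lemma funpow_comp_left: "((\<circ>) T ^^ n) Z = (T ^^ n) \<circ> Z"
  for T :: "'a \<Rightarrow> 'a" and Z :: "'b \<Rightarrow> 'a"
  by (induction n) simp_all

lemma funpow_comp_right: "((\<lambda>Z. Z \<circ> T) ^^ n) Z = Z \<circ> (T ^^ n)"
  for T :: "'a \<Rightarrow> 'a" and Z :: "'a \<Rightarrow> 'b"
  by (induction n) (simp_all add: fun_eq_iff funpow_swap1)

definition anticommutator :: "('v \<Rightarrow> 'v::plus) \<Rightarrow> ('v \<Rightarrow> 'v) \<Rightarrow> 'v \<Rightarrow> 'v" where
  "anticommutator T Z = (T \<circ> Z) + (Z \<circ> T)"

context vector_space
begin

lemma linear_fun_scaleI: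
  assumes "\<And>Z Z'. L (Z + Z') = L Z + L Z'"
    and "\<And>c Z. L (fun_scale scale c Z) = fun_scale scale c (L Z)"
  shows "Vector_Spaces.linear (fun_scale scale) (fun_scale scale) L"
  unfolding Vector_Spaces.linear_iff by (simp add: assms vector_space_fun_scale[OF vector_space_axioms])

lemma linear_comp_left:
  assumes "Vector_Spaces.linear scale scale T"
  shows "Vector_Spaces.linear (fun_scale scale) (fun_scale scale) ((\<circ>) T)"
  by (rule linear_fun_scaleI)
    (simp_all add: fun_eq_iff endo.linear_add[OF assms] endo.linear_scale[OF assms])

lemma linear_comp_right: "Vector_Spaces.linear (fun_scale scale) (fun_scale scale) (\<lambda>Z. Z \<circ> T)"
  by (rule linear_fun_scaleI) (simp_all add: fun_eq_iff)

lemma commuting_endos_comp_left_right: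
  assumes "Vector_Spaces.linear scale scale T"
  shows "commuting_endos (fun_scale scale) ((\<circ>) T) (\<lambda>Z. Z \<circ> U)"
  by (simp add: commuting_endos_def commuting_endos_axioms_def vector_space_fun_scale
      vector_space_axioms linear_comp_left[OF assms] linear_comp_right comp_assoc)

lemma poly_endo_comp_left:
  assumes "Vector_Spaces.linear scale scale T"
  shows "poly_endo (fun_scale scale) p ((\<circ>) T) Z = poly_endo scale p T \<circ> Z"
  by (induction p arbitrary: Z)
    (simp_all add: fun_eq_iff poly_endo_pCons[OF assms]
      vector_space.poly_endo_0[OF vector_space_fun_scale[OF vector_space_axioms]]
      vector_space.poly_endo_pCons[OF vector_space_fun_scale[OF vector_space_axioms]
        linear_comp_left[OF assms]])

lemma poly_endo_comp_right:
  assumes T: "Vector_Spaces.linear scale scale T" and Z: "Vector_Spaces.linear scale scale Z"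
  shows "poly_endo (fun_scale scale) p (\<lambda>Z. Z \<circ> T) Z = Z \<circ> poly_endo scale p T"
proof -
  interpret W: vector_space "fun_scale scale :: 'a \<Rightarrow> ('b \<Rightarrow> 'b) \<Rightarrow> 'b \<Rightarrow> 'b"
    by (rule vector_space_fun_scale[OF vector_space_axioms])
  show ?thesis
  proof (induction p)
    case (pCons c p)
    have "poly_endo (fun_scale scale) (pCons c p) (\<lambda>Z. Z \<circ> T) Z
        = fun_scale scale c Z + (poly_endo (fun_scale scale) p (\<lambda>Z. Z \<circ> T) Z \<circ> T)"
      by (rule W.poly_endo_pCons[OF linear_comp_right])
    also have "\<dots> = Z \<circ> poly_endo scale (pCons c p) T"
      by (simp add: pCons.IH fun_eq_iff poly_endo_pCons[OF T] endo.linear_add[OF Z]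
          endo.linear_scale[OF Z] poly_endo_commute[OF T T])
    finally show ?case .
  qed (simp only: W.poly_endo_0, simp add: fun_eq_iff endo.linear_0[OF Z])
qed

lemma anticommutator_eq: "anticommutator T = (\<lambda>Z. (T \<circ> Z) + (Z \<circ> T))"
  by (rule ext) (rule anticommutator_def)

lemma commuting_endos_anticommutator:
  assumes S: "Vector_Spaces.linear scale scale S" and N: "Vector_Spaces.linear scale scale N"
    and SN: "S \<circ> N = N \<circ> S"
  shows "commuting_endos (fun_scale scale) (anticommutator S) (anticommutator N)"
proof -
  have linear_anticommutator: "Vector_Spaces.linear (fun_scale scale) (fun_scale scale) (anticommutator T)"
    if T: "Vector_Spaces.linear scale scale T" for T
  proof -
    interpret C: commuting_endos "fun_scale scale" "(\<circ>) T" "\<lambda>Z. Z \<circ> T"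
      by (rule commuting_endos_comp_left_right[OF T])
    show ?thesis
      using C.linear_poly2_endo[of "var_x + var_y"]
      by (simp add: C.poly2_endo_sum_vars anticommutator_eq)
  qed
  have SN_apply: "S (N v) = N (S v)" for v
    using SN by (simp add: fun_eq_iff)
  have "anticommutator S (anticommutator N Z) = anticommutator N (anticommutator S Z)" for Z
    by (simp add: anticommutator_def fun_eq_iff endo.linear_add[OF S] endo.linear_add[OF N] SN_apply
        ac_simps)
  then show ?thesis
    by (simp add: commuting_endos_def commuting_endos_axioms_def vector_space_fun_scale
        vector_space_axioms linear_anticommutator S N)
qed

end

lemma (in vector_space) poly_endo_anticommutator_eq_0:
  assumes S: "Vector_Spaces.linear scale scale S" and Z: "Vector_Spaces.linear scale scale Z"
    and pS: "poly_endo scale p S = (\<lambda>_. 0)"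
    and P: "poly_subst2 P (var_x + var_y) \<in> ideal2 (poly_in_x p) (poly_in_y p)"
  shows "poly_endo (fun_scale scale) P (anticommutator S) Z = 0"
proof -
  interpret CS: commuting_endos "fun_scale scale" "(\<circ>) S" "\<lambda>Z. Z \<circ> S"
    by (rule commuting_endos_comp_left_right[OF S])
  have "poly_endo (fun_scale scale) p ((\<circ>) S) Z = 0"
    and "poly_endo (fun_scale scale) p (\<lambda>Z. Z \<circ> S) Z = 0"
    by (simp_all add: poly_endo_comp_left[OF S] poly_endo_comp_right[OF S Z] pS fun_eq_iff
        endo.linear_0[OF Z])
  from CS.poly_endo_sum_eq_0[OF P this] show ?thesis
    by (simp add: anticommutator_eq)
qed

lemma (in vector_space) funpow_anticommutator_eq_0:
  assumes N: "Vector_Spaces.linear scale scale N" and Z: "Vector_Spaces.linear scale scale Z"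
    and NK: "N ^^ K = (\<lambda>_. 0)"
  shows "(anticommutator N ^^ (K + K)) Z = 0"
proof -
  interpret CN: commuting_endos "fun_scale scale" "(\<circ>) N" "\<lambda>Z. Z \<circ> N"
    by (rule commuting_endos_comp_left_right[OF N])
  have "((\<circ>) N ^^ K) Z = 0" and "((\<lambda>Z. Z \<circ> N) ^^ K) Z = 0"
    by (simp_all add: funpow_comp_left funpow_comp_right NK fun_eq_iff endo.linear_0[OF Z])
  from CN.funpow_sum_eq_0[OF this] show ?thesis
    by (simp add: anticommutator_eq)
qed

lemma anticommutator_semisimple_part_is_poly:
  fixes scale :: "'k::field_char_0 \<Rightarrow> 'v::ab_group_add \<Rightarrow> 'v" and S N :: "'v \<Rightarrow> 'v"
  assumes vs: "vector_space scale"
    and S: "Vector_Spaces.linear scale scale S" and N: "Vector_Spaces.linear scale scale N"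
    and SN: "S \<circ> N = N \<circ> S" and "semisimple_endo scale S" and "nilpotent_endo N"
  obtains h where "\<And>Z. Vector_Spaces.linear scale scale Z \<Longrightarrow>
    poly_endo (fun_scale scale) h (\<lambda>Z. anticommutator S Z + anticommutator N Z) Z = anticommutator S Z"
proof -
  interpret vector_space scale
    by (rule vs)
  obtain p where p: "lead_coeff p = 1" "coprime p (pderiv p)" and pS: "poly_endo scale p S = (\<lambda>_. 0)"
    using semisimple_endoE_monic[OF vs \<open>semisimple_endo scale S\<close>] by blast
  obtain P where "coprime P (pderiv P)"
    and P_sum: "poly_subst2 P (var_x + var_y) \<in> ideal2 (poly_in_x p) (poly_in_y p)"
    using separable_poly_at_sum_in_ideal2[OF p] by blast
  then obtain r s where bezout: "r * P + s * pderiv P = 1"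
    by (auto elim: coprime_imp_bezout)
  obtain K where NK: "N ^^ K = (\<lambda>_. 0)"
    using \<open>nilpotent_endo N\<close> unfolding nilpotent_endo_def by blast
  interpret C: commuting_endos "fun_scale scale" "anticommutator S" "anticommutator N"
    by (rule commuting_endos_anticommutator[OF S N SN])
  obtain h where h: "\<And>Z. poly_endo (fun_scale scale) P (anticommutator S) Z = 0
      \<Longrightarrow> (anticommutator N ^^ (K + K)) Z = 0
      \<Longrightarrow> poly_endo (fun_scale scale) h (\<lambda>Z. anticommutator S Z + anticommutator N Z) Z
        = anticommutator S Z"
    using C.poly_endo_sum_eq_left[OF bezout] by blast
  show thesis
    by (rule that, rule h)
      (simp_all add: poly_endo_anticommutator_eq_0[OF S _ pS P_sum]
        funpow_anticommutator_eq_0[OF N _ NK])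
qed

section \<open>Unital algebras\<close>

locale unital_algebra = vector_space scale for scale :: "'k::field \<Rightarrow> 'v::ab_group_add \<Rightarrow> 'v" +
  fixes m :: "'v \<Rightarrow> 'v \<Rightarrow> 'v" and e :: 'v
  assumes linear_mult_left: "Vector_Spaces.linear scale scale (m x)"
    and linear_mult_right: "Vector_Spaces.linear scale scale (\<lambda>x. m x y)"
    and mult_unit_left [simp]: "m e x = x"
    and mult_unit_right [simp]: "m x e = x"

lemma fd_unital_algebra_imp_unital_algebra:
  "fd_unital_algebra scale B m e \<Longrightarrow> unital_algebra scale m e"
  unfolding fd_unital_algebra_def unital_algebra_def unital_algebra_axioms_def
    finite_dimensional_vector_space_def
  by blast

context unital_algebra
begin

lemma mult_add_right: "m x (y + z) = m x y + m x z"
  and mult_scale_right: "m x (scale c y) = scale c (m x y)"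
  and mult_add_left: "m (x + y) z = m x z + m y z"
  and mult_diff_left: "m (x - y) z = m x z - m y z"
  and mult_scale_left: "m (scale c x) z = scale c (m x z)"
  using endo.linear_add[OF linear_mult_left] endo.linear_scale[OF linear_mult_left]
    endo.linear_add[OF linear_mult_right] endo.linear_diff[OF linear_mult_right]
    endo.linear_scale[OF linear_mult_right]
  by blast+

lemma linear_mult: "Vector_Spaces.linear scale (fun_scale scale) m"
  by (simp add: Vector_Spaces.linear_iff vector_space_axioms vector_space_fun_scale fun_eq_iff
      mult_add_left mult_scale_left)

lemma LN_alt_iff_anticommutator:
  "a \<in> LN_alt m \<longleftrightarrow> (\<forall>x y. m a (m x y) + m x (m a y) = m (m a x + m x a) y)"
  unfolding LN_alt_def associator_def by (auto simp: mult_add_left algebra_simps)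

lemma LN_alt_diff:
  assumes "a \<in> LN_alt m" and "b \<in> LN_alt m"
  shows "a - b \<in> LN_alt m"
  using assms unfolding LN_alt_def associator_def
  by (simp add: mult_diff_left endo.linear_diff[OF linear_mult_left] algebra_simps)

lemma linear_jordan_mult: "Vector_Spaces.linear scale scale (\<lambda>x. m a x + m x a)"
  by (simp add: Vector_Spaces.linear_iff vector_space_axioms mult_add_left mult_add_right
      mult_scale_left mult_scale_right scale_right_distrib ac_simps)

lemma anticommutator_Lmul:
  assumes "a \<in> LN_alt m" and "\<And>v. m a v = S v + N v"
  shows "anticommutator S (m x) + anticommutator N (m x) = m (m a x + m x a)"
  using assms
  by (simp add: fun_eq_iff anticommutator_def LN_alt_iff_anticommutator mult_add_right ac_simps)

lemma poly_endo_mult_intertwine: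
  assumes "Vector_Spaces.linear scale scale M"
    and "Vector_Spaces.linear (fun_scale scale) (fun_scale scale) \<Phi>"
    and "\<And>x. \<Phi> (m x) = m (M x)"
  shows "poly_endo (fun_scale scale) h \<Phi> (m x) = m (poly_endo scale h M x)"
  by (rule vector_space_pair.poly_endo_intertwine[OF _ linear_mult assms])
    (simp add: vector_space_pair_def vector_space_axioms vector_space_fun_scale)

lemma Lmul_diff:
  assumes "Lmul m a = (\<lambda>v. S v + N v)" and "S = Lmul m b"
  shows "N = Lmul m (a - b)"
  using assms by (simp add: Lmul_def fun_eq_iff mult_diff_left)

lemma Lmul_LN_alt_if_anticommutator:
  assumes two: "(2::'k) \<noteq> 0"
    and TM: "\<And>x y. T (m x y) + m x (T y) = m (M x) y"
  shows "T = Lmul m (T e)" and "T e \<in> LN_alt m"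
proof -
  have M: "M x = T x + m x (T e)" for x
    using TM[of x e] by simp
  have Te: "m (T e) y = T y" for y
  proof -
    have "T y + T y = m (T e) y + m (T e) y"
      using TM[of e y] M[of e] by (simp add: mult_add_left)
    then have "scale 2 (m (T e) y) = scale 2 (T y)"
      by (simp only: scale_two)
    with two show ?thesis
      by simp
  qed
  then show "T = Lmul m (T e)"
    by (simp add: fun_eq_iff Lmul_def)
  have "m (T e) (m x y) + m x (m (T e) y) = m (m (T e) x + m x (T e)) y" for x y
    unfolding Te TM M ..
  then show "T e \<in> LN_alt m"
    unfolding LN_alt_iff_anticommutator by blast
qed

end

theorem lemma3p5:
  fixes scale :: "'k::field_char_0 \<Rightarrow> 'v::ab_group_add \<Rightarrow> 'v"
    and B :: "'v set" and m :: "'v \<Rightarrow> 'v \<Rightarrow> 'v" and e :: 'v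
    and a :: 'v and S N :: "'v \<Rightarrow> 'v"
  assumes "fd_unital_algebra scale B m e"
    and "a \<in> LN_alt m"
    and "Vector_Spaces.linear scale scale S"
    and "Vector_Spaces.linear scale scale N"
    and "Lmul m a = (\<lambda>v. S v + N v)"
    and "S \<circ> N = N \<circ> S"
    and "semisimple_endo scale S"
    and "nilpotent_endo N"
  shows "\<exists>a_s a_n. a_s \<in> LN_alt m \<and> a_n \<in> LN_alt m \<and>
           S = Lmul m a_s \<and> N = Lmul m a_n"
proof -
  interpret unital_algebra scale m e
    using assms(1) by (rule fd_unital_algebra_imp_unital_algebra)
  interpret C: commuting_endos "fun_scale scale" "anticommutator S" "anticommutator N"
    by (rule commuting_endos_anticommutator[OF assms(3,4,6)])
  obtain h where h: "\<And>Z. Vector_Spaces.linear scale scale Z \<Longrightarrow>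
      poly_endo (fun_scale scale) h (\<lambda>Z. anticommutator S Z + anticommutator N Z) Z = anticommutator S Z"
    using anticommutator_semisimple_part_is_poly[OF vector_space_axioms assms(3,4,6-8)] by blast
  have "m a v = S v + N v" for v
    using assms(5) by (simp add: Lmul_def fun_eq_iff)
  then have "anticommutator S (m x) = m (poly_endo scale h (\<lambda>x. m a x + m x a) x)" for x
    unfolding h[OF linear_mult_left, symmetric]
    by (intro poly_endo_mult_intertwine C.linear_sum linear_jordan_mult
        anticommutator_Lmul assms(2))
  then have "S (m x y) + m x (S y) = m (poly_endo scale h (\<lambda>x. m a x + m x a) x) y" for x y
    by (simp add: anticommutator_def fun_eq_iff)
  moreover have "(2::'k) \<noteq> 0"
    by simp
  ultimately have "S = Lmul m (S e)" and "S e \<in> LN_alt m"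
    by (rule Lmul_LN_alt_if_anticommutator[rotated])+
  with assms(2,5) show ?thesis
    using Lmul_diff LN_alt_diff by blast
qed

end
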